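(* Let $A,B\in\mathrm{SL}_2\mathbb{R}$ be noncommuting, with $\mathrm{tr}(A)=\mathrm{tr}(B)\ge2$, and assume that the pair $A,B$ is well oriented. Then the only optimal word is $ab$.
   Context: For a matrix $X$ of trace $\ge2$, $X\ne I$, its attracting/repelling fixed points in $\partial\mathcal{H}=\mathbb{P}^1\mathbb{R}$ (under the Möbius action) are denoted with $+$/$-$ superscripts ($\alpha^\pm$ for $A$, $\beta^\pm$ for $B$); if $X$ is parabolic both denote its unique fixed point. Coherent orientation: with $\partial\mathcal{H}$ cyclically ordered and $[\alpha,\beta]$ the closed counterclockwise interval from $\alpha$ to $\beta$, let $I^+=\{\alpha^+\}$ if $\alpha^+=\beta^+$, and otherwise the one of $[\alpha^+,\beta^+],[\beta^+,\alpha^+]$ mapped into itself by both $A$ and $B$ (if it exists); define $I^-$ likewise with $A^{-1},B^{-1},\alpha^-,\beta^-$; the pair $A,B$ is coherently oriented if both exist. The pair $A,B$ is well oriented if $A,B$ is coherently oriented but $A,B^{-1}$ is not. Words: $F_2^+$ is the free semigroup of nonempty words over $\{a,b\}$, $|w|$ the length, $\phi(a)=A,\phi(b)=B$, $[w]=\mathrm{tr}(\phi(w))$. Define $w\preceq u$ iff $[w^{|u|}]\le[u^{|w|}]$; $w$ is maximal if $u\preceq w$ for all $u$. A Lyndon word is one strictly smaller lexicographically ($a<b$) than each of its proper rotations. A complete set of optimal words is a set of pairwise distinct maximal Lyndon words such that every maximal word is a power of a rotation of one of them; it is unique if it exists, and its elements are the optimal words. *)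

theory Defs
  imports "HOL-Analysis.Analysis"
begin

type_synonym mat2 = "real^2^2"

text \<open>Points of the boundary P^1 R = R \<union> {\<infinity>}: Some x is the real x, None is \<infinity>.\<close>
type_synonym bpt = "real option"

definition pt_of_vec :: "real^2 \<Rightarrow> bpt" where
  "pt_of_vec v = (if v$2 = 0 then None else Some (v$1 / v$2))"

definition vec_of_pt :: "bpt \<Rightarrow> real^2" where
  "vec_of_pt p = (case p of None \<Rightarrow> vector [1, 0] | Some x \<Rightarrow> vector [x, 1])"

definition mob :: "mat2 \<Rightarrow> bpt \<Rightarrow> bpt" where
  "mob X p = pt_of_vec (X *v vec_of_pt p)"

definition lam_plus :: "mat2 \<Rightarrow> real" where
  "lam_plus X = (trace X + sqrt ((trace X)\<^sup>2 - 4)) / 2"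

definition lam_minus :: "mat2 \<Rightarrow> real" where
  "lam_minus X = (trace X - sqrt ((trace X)\<^sup>2 - 4)) / 2"

text \<open>Attracting fixed point: the eigenline of the larger eigenvalue;
  repelling fixed point: the eigenline of the smaller eigenvalue.
  For parabolic X both are its unique fixed point.\<close>
definition fix_plus :: "mat2 \<Rightarrow> bpt" where
  "fix_plus X = (THE p. \<exists>v. v \<noteq> 0 \<and> X *v v = lam_plus X *\<^sub>R v \<and> p = pt_of_vec v)"

definition fix_minus :: "mat2 \<Rightarrow> bpt" where
  "fix_minus X = (THE p. \<exists>v. v \<noteq> 0 \<and> X *v v = lam_minus X *\<^sub>R v \<and> p = pt_of_vec v)"

text \<open>Closed counterclockwise interval [\<alpha>,\<beta>] on the boundary of the upper half plane
  (counterclockwise = increasing real direction, passing through \<infinity>).\<close>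
definition ccw_interval :: "bpt \<Rightarrow> bpt \<Rightarrow> bpt set" where
  "ccw_interval \<alpha> \<beta> =
     (case (\<alpha>, \<beta>) of
        (None, None) \<Rightarrow> {None}
      | (None, Some y) \<Rightarrow> {None} \<union> Some ` {..y}
      | (Some x, None) \<Rightarrow> Some ` {x..} \<union> {None}
      | (Some x, Some y) \<Rightarrow>
          (if x \<le> y then Some ` {x..y} else Some ` {x..} \<union> {None} \<union> Some ` {..y}))"

definition maps_into :: "mat2 \<Rightarrow> bpt set \<Rightarrow> bool" where
  "maps_into X I \<longleftrightarrow> mob X ` I \<subseteq> I"

definition interval_exists :: "mat2 \<Rightarrow> mat2 \<Rightarrow> bpt \<Rightarrow> bpt \<Rightarrow> bool" where
  "interval_exists X Y p q \<longleftrightarrow>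
     p = q \<or>
     (maps_into X (ccw_interval p q) \<and> maps_into Y (ccw_interval p q)) \<or>
     (maps_into X (ccw_interval q p) \<and> maps_into Y (ccw_interval q p))"

definition coherently_oriented :: "mat2 \<Rightarrow> mat2 \<Rightarrow> bool" where
  "coherently_oriented A B \<longleftrightarrow>
     interval_exists A B (fix_plus A) (fix_plus B) \<and>
     interval_exists (matrix_inv A) (matrix_inv B) (fix_minus A) (fix_minus B)"

definition well_oriented :: "mat2 \<Rightarrow> mat2 \<Rightarrow> bool" where
  "well_oriented A B \<longleftrightarrow> coherently_oriented A B \<and> \<not> coherently_oriented A (matrix_inv B)"

datatype letter = La | Lb

definition phi :: "mat2 \<Rightarrow> mat2 \<Rightarrow> letter list \<Rightarrow> mat2" where
  "phi A B w = foldr (\<lambda>x M. (case x of La \<Rightarrow> A | Lb \<Rightarrow> B) ** M) w (mat 1)"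

definition wtr :: "mat2 \<Rightarrow> mat2 \<Rightarrow> letter list \<Rightarrow> real" where
  "wtr A B w = trace (phi A B w)"

definition wpow :: "letter list \<Rightarrow> nat \<Rightarrow> letter list" where
  "wpow w n = concat (replicate n w)"

definition wle :: "mat2 \<Rightarrow> mat2 \<Rightarrow> letter list \<Rightarrow> letter list \<Rightarrow> bool" where
  "wle A B w u \<longleftrightarrow> wtr A B (wpow w (length u)) \<le> wtr A B (wpow u (length w))"

definition maximal_word :: "mat2 \<Rightarrow> mat2 \<Rightarrow> letter list \<Rightarrow> bool" where
  "maximal_word A B w \<longleftrightarrow> w \<noteq> [] \<and> (\<forall>u. u \<noteq> [] \<longrightarrow> wle A B u w)"

definition letter_less :: "(letter \<times> letter) set" where
  "letter_less = {(La, Lb)}"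

definition lyndon :: "letter list \<Rightarrow> bool" where
  "lyndon w \<longleftrightarrow> w \<noteq> [] \<and>
     (\<forall>k. 0 < k \<and> k < length w \<longrightarrow> (w, rotate k w) \<in> lexord letter_less)"

definition complete_optimal_set :: "mat2 \<Rightarrow> mat2 \<Rightarrow> letter list set \<Rightarrow> bool" where
  "complete_optimal_set A B S \<longleftrightarrow>
     (\<forall>s\<in>S. maximal_word A B s \<and> lyndon s) \<and>
     (\<forall>w. maximal_word A B w \<longrightarrow>
        (\<exists>s\<in>S. \<exists>k n. n \<ge> 1 \<and> w = wpow (rotate k s) n))"

end

theory Submission
  imports Defs
begin

text \<open>
  Write \<open>t = tr A = tr B\<close> and \<open>x = tr (A B)\<close>. If \<open>tr (A B\<^sup>-\<^sup>1) \<ge> 2\<close>, the attracting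
  fixed points of \<open>A\<close> and \<open>B\<^sup>-\<^sup>1\<close> (and likewise the repelling ones) bound an arc that both
  maps send into itself, since both preserve a cone spanned by eigenvectors; so well orientation
  forces \<open>tr (A B\<^sup>-\<^sup>1) < 2\<close>, i.e. \<open>x = t\<^sup>2 - tr (A B\<^sup>-\<^sup>1) > t\<^sup>2 - 2\<close>.

  Traces of words in \<open>A\<close>, \<open>B\<close> are polynomials in \<open>t\<close> and \<open>x\<close>, so the pair may be replaced by
  \<open>M = [[a, b], [0, 1/a]]\<close> and \<open>N = M\<^sup>T\<close> with \<open>a + 1/a = t\<close>, \<open>b\<^sup>2 = x - t\<^sup>2 + 2 > 0\<close>.
  Both letters have squared operator norm \<open>L\<close>, the larger eigenvalue of \<open>M N = M M\<^sup>T\<close>, while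
  \<open>M\<^sup>2\<close> and \<open>N\<^sup>2\<close> have squared norm \<open>< L\<^sup>2\<close>. As \<open>(tr W)\<^sup>2 \<le> c + 1/c + 2\<close> for every
  \<open>W \<in> SL\<^sub>2\<close> of squared norm \<open>c\<close>, a word \<open>w\<close> satisfies
  \<open>tr (w\<^sup>2) \<le> L\<^bsup>|w|\<^esup> + L\<^bsup>-|w|\<^esup> = tr ((a b)\<^bsup>|w|\<^esup>)\<close>, strictly unless the letters of
  \<open>w w\<close> alternate, i.e. unless \<open>w\<close> is a power of \<open>a b\<close> or \<open>b a\<close>.
\<close>

section \<open>2\<times>2 matrices in coordinates\<close>

definition mat2_of :: "real \<Rightarrow> real \<Rightarrow> real \<Rightarrow> real \<Rightarrow> mat2" where
  "mat2_of a b c d = vector [vector [a, b], vector [c, d]]"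

lemma mat2_of_nth [simp]:
  "mat2_of a b c d $ 1 $ 1 = a" "mat2_of a b c d $ 1 $ 2 = b"
  "mat2_of a b c d $ 2 $ 1 = c" "mat2_of a b c d $ 2 $ 2 = d"
  by (simp_all add: mat2_of_def)

lemma mat2_eq_iff: "(X::mat2) = Y \<longleftrightarrow> X$1$1 = Y$1$1 \<and> X$1$2 = Y$1$2 \<and> X$2$1 = Y$2$1 \<and> X$2$2 = Y$2$2"
  by (auto simp: vec_eq_iff forall_2)

lemma vector2_eq_iff: "(u::real^2) = v \<longleftrightarrow> u$1 = v$1 \<and> u$2 = v$2"
  by (auto simp: vec_eq_iff forall_2)

lemma mat2_cases: obtains a b c d where "X = mat2_of a b c d"
  by (metis mat2_eq_iff mat2_of_nth)

lemma vector2_cases: obtains p q where "(v::real^2) = vector [p, q]"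
  by (metis vector2_eq_iff vector_2)

lemma mat2_of_eq_iff [simp]: "mat2_of a b c d = mat2_of a' b' c' d' \<longleftrightarrow> a = a' \<and> b = b' \<and> c = c' \<and> d = d'"
  by (simp add: mat2_eq_iff)

lemma vector2_eq_vector2_iff [simp]: "(vector [a, b] :: real^2) = vector [a', b'] \<longleftrightarrow> a = a' \<and> b = b'"
  by (simp add: vector2_eq_iff)

lemma mat2_of_mult [simp]:
  "mat2_of a b c d ** mat2_of e f g h = mat2_of (a*e + b*g) (a*f + b*h) (c*e + d*g) (c*f + d*h)"
  by (simp add: mat2_eq_iff matrix_matrix_mult_def sum_2)

lemma mat2_of_mult_vector [simp]: "mat2_of a b c d *v vector [x, y] = vector [a*x + b*y, c*x + d*y]"
  by (simp add: vector2_eq_iff matrix_vector_mult_def sum_2)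

lemma det_mat2_of [simp]: "det (mat2_of a b c d) = a*d - b*c"
  by (simp add: det_2)

lemma trace_mat2_of [simp]: "trace (mat2_of a b c d) = a + d"
  by (simp add: trace_def sum_2)

lemma mat_eq_mat2_of: "(mat k :: mat2) = mat2_of k 0 0 k"
  by (simp add: mat2_eq_iff mat_def)

lemma mat2_of_scaleR [simp]: "k *\<^sub>R mat2_of a b c d = mat2_of (k*a) (k*b) (k*c) (k*d)"
  by (simp add: mat2_eq_iff)

lemma mat2_of_diff [simp]: "mat2_of a b c d - mat2_of a' b' c' d' = mat2_of (a-a') (b-b') (c-c') (d-d')"
  by (simp add: mat2_eq_iff)

lemma mat2_of_add [simp]: "mat2_of a b c d + mat2_of a' b' c' d' = mat2_of (a+a') (b+b') (c+c') (d+d')"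
  by (simp add: mat2_eq_iff)

lemma vector2_scaleR [simp]: "k *\<^sub>R (vector [a, b] :: real^2) = vector [k*a, k*b]"
  by (simp add: vector2_eq_iff)

lemma vector2_eq_0_iff [simp]: "(vector [a, b] :: real^2) = 0 \<longleftrightarrow> a = 0 \<and> b = 0"
  by (simp add: vector2_eq_iff)

lemma matrix_vector_mult_uminus: "(X::real^'n^'m) *v (- u) = - (X *v u)"
  using matrix_vector_mult_scaleR[of X "-1" u] by simp

lemma mat_matrix_vector_mult: "(mat k :: mat2) *v z = k *\<^sub>R z"
  by (cases z rule: vector2_cases) (simp add: mat_eq_mat2_of)

lemma mat_mult_commute: "(mat k :: mat2) ** (X::mat2) = X ** mat k"
  by (cases X rule: mat2_cases) (simp add: mat_eq_mat2_of)

lemma trace_scaleR: "trace (c *\<^sub>R X) = c * trace (X::real^'n^'n)"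
  by (simp add: trace_def sum_distrib_left)

lemma cayley_hamilton2_mult:
  assumes "det (X::mat2) = 1"
  shows "X ** (X ** P) = trace X *\<^sub>R (X ** P) - (P::mat2)"
proof -
  obtain a b c d where X: "X = mat2_of a b c d" by (rule mat2_cases)
  obtain p q r s where P: "P = mat2_of p q r s" by (rule mat2_cases)
  have "a * d - b * c = 1" using assms by (simp add: X)
  then show ?thesis unfolding X P by simp algebra
qed

definition adjugate2 :: "mat2 \<Rightarrow> mat2" where
  "adjugate2 X = trace X *\<^sub>R mat 1 - X"

lemma adjugate2_mult: "adjugate2 X ** X = det X *\<^sub>R mat 1"
  by (cases X rule: mat2_cases) (simp add: adjugate2_def mat_eq_mat2_of algebra_simps)

lemma mult_adjugate2: "X ** adjugate2 X = det X *\<^sub>R mat 1"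
  by (cases X rule: mat2_cases) (simp add: adjugate2_def mat_eq_mat2_of algebra_simps)

lemma matrix_inv_sl2:
  assumes "det X = 1"
  shows "matrix_inv X = adjugate2 X"
  unfolding matrix_inv_def
proof (rule some_equality)
  fix Y assume "X ** Y = mat 1 \<and> Y ** X = mat 1"
  then have "adjugate2 X = adjugate2 X ** (X ** Y)" by simp
  also have "\<dots> = (adjugate2 X ** X) ** Y" by (simp add: matrix_mul_assoc)
  also have "\<dots> = Y" using assms by (simp add: adjugate2_mult)
  finally show "Y = adjugate2 X" ..
qed (use assms in \<open>simp add: adjugate2_mult mult_adjugate2\<close>)

lemma det_adjugate2: "det (adjugate2 X) = det X"
  by (cases X rule: mat2_cases) (simp add: adjugate2_def mat_eq_mat2_of algebra_simps)

lemma trace_adjugate2: "trace (adjugate2 X) = trace X"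
  by (cases X rule: mat2_cases) (simp add: adjugate2_def mat_eq_mat2_of)

lemma trace_mult_adjugate2: "trace (X ** adjugate2 Y) = trace X * trace Y - trace (X ** Y)"
  by (cases X rule: mat2_cases, cases Y rule: mat2_cases)
     (simp add: adjugate2_def mat_eq_mat2_of algebra_simps)

lemma trace_adjugate2_mult: "trace (adjugate2 X ** adjugate2 Y) = trace (X ** Y)"
  by (cases X rule: mat2_cases, cases Y rule: mat2_cases)
     (simp add: adjugate2_def mat_eq_mat2_of algebra_simps)

lemma adjugate2_mult_commute_iff: "X ** adjugate2 Y = adjugate2 Y ** X \<longleftrightarrow> X ** Y = Y ** X"
  by (cases X rule: mat2_cases, cases Y rule: mat2_cases)
     (auto simp: adjugate2_def mat_eq_mat2_of algebra_simps)

lemma adjugate2_eigenvector: "X *v u = l *\<^sub>R u \<Longrightarrow> adjugate2 X *v u = (trace X - l) *\<^sub>R u"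
  by (simp add: adjugate2_def matrix_vector_mult_diff_rdistrib mat_matrix_vector_mult scaleR_diff_left
      flip: scaleR_matrix_vector_assoc)

lemma matrix_vector_mult_eq_0_iff:
  assumes "det (X::mat2) \<noteq> 0"
  shows "X *v w = 0 \<longleftrightarrow> w = 0"
proof
  assume "X *v w = 0"
  then have "det X *\<^sub>R w = 0"
    by (metis adjugate2_mult matrix_vector_mul_assoc matrix_vector_mult_0_right
        matrix_vector_mul_lid matrix_vector_mult_scaleR scaleR_matrix_vector_assoc)
  with assms show "w = 0" by simp
qed simp

definition cross2 :: "real^2 \<Rightarrow> real^2 \<Rightarrow> real" where
  "cross2 u v = u$1 * v$2 - u$2 * v$1"

lemma cross2_vector2 [simp]: "cross2 (vector [a, b]) (vector [c, d]) = a*d - b*c"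
  by (simp add: cross2_def)

lemma cross2_scaleR [simp]: "cross2 (k *\<^sub>R u) v = k * cross2 u v" "cross2 u (k *\<^sub>R v) = k * cross2 u v"
  by (simp_all add: cross2_def algebra_simps)

lemma cross2_add [simp]: "cross2 (u + w) v = cross2 u v + cross2 w v" "cross2 u (v + w) = cross2 u v + cross2 u w"
  by (simp_all add: cross2_def algebra_simps)

lemma cross2_minus [simp]: "cross2 (- u) v = - cross2 u v" "cross2 u (- v) = - cross2 u v"
  by (simp_all add: cross2_def)

lemma cross2_zero [simp]: "cross2 0 v = 0" "cross2 u 0 = 0" "cross2 u u = 0"
  by (simp_all add: cross2_def)

lemma cross2_commute: "cross2 v u = - cross2 u v"
  by (simp add: cross2_def)

lemma cross2_matrix_vector_mult: "cross2 ((X::mat2) *v u) (X *v v) = det X * cross2 u v"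
  by (cases X rule: mat2_cases, cases u rule: vector2_cases, cases v rule: vector2_cases)
     (simp add: algebra_simps)

lemma trace_mult_cross2: "trace (X::mat2) * cross2 u v = cross2 (X *v u) v + cross2 u (X *v v)"
  by (cases X rule: mat2_cases, cases u rule: vector2_cases, cases v rule: vector2_cases)
     (simp add: algebra_simps)

lemma cross2_scaleR_eq: "cross2 u v *\<^sub>R w = cross2 w v *\<^sub>R u + cross2 u w *\<^sub>R v"
  by (simp add: cross2_def vector2_eq_iff algebra_simps)

lemma cross2_coordinates:
  assumes "cross2 u v \<noteq> 0"
  shows "w = (cross2 w v / cross2 u v) *\<^sub>R u + (cross2 u w / cross2 u v) *\<^sub>R v"
proof -
  have "w = (1 / cross2 u v) *\<^sub>R (cross2 u v *\<^sub>R w)" using assms by simp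
  then show ?thesis unfolding cross2_scaleR_eq[of u v w] by (simp add: scaleR_add_right)
qed

section \<open>Arcs of the projective line invariant under two matrices\<close>

lemma vec_of_pt_simps [simp]: "vec_of_pt None = vector [1, 0]" "vec_of_pt (Some x) = vector [x, 1]"
  by (simp_all add: vec_of_pt_def)

lemma pt_of_vec_vector2 [simp]: "pt_of_vec (vector [a, b]) = (if b = 0 then None else Some (a/b))"
  by (simp add: pt_of_vec_def)

lemma vec_of_pt_nonzero [simp]: "vec_of_pt p \<noteq> 0"
  by (cases p) simp_all

lemma pt_of_vec_vec_of_pt [simp]: "pt_of_vec (vec_of_pt p) = p"
  by (cases p) simp_all

lemma pt_of_vec_scaleR: "k \<noteq> 0 \<Longrightarrow> pt_of_vec (k *\<^sub>R w) = pt_of_vec w"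
  by (cases w rule: vector2_cases) simp

lemma vec_of_pt_pt_of_vec:
  assumes "w \<noteq> 0"
  obtains k where "k \<noteq> 0" "vec_of_pt (pt_of_vec w) = k *\<^sub>R w"
proof -
  obtain a b where w: "w = vector [a, b]" by (rule vector2_cases)
  show thesis
  proof (cases "b = 0")
    case True
    with assms w show thesis by (intro that[of "1/a"]) auto
  next
    case False
    with w show thesis by (intro that[of "1/b"]) auto
  qed
qed

lemma pt_of_vec_eq_iff:
  assumes "u \<noteq> 0" "v \<noteq> 0"
  shows "pt_of_vec u = pt_of_vec v \<longleftrightarrow> cross2 u v = 0"
  using assms
  by (cases u rule: vector2_cases, cases v rule: vector2_cases) (auto simp: field_simps)

lemma mem_ccw_interval_iff:
  assumes "p \<noteq> q"
  shows "z \<in> ccw_interval p q \<longleftrightarrow>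
    cross2 (vec_of_pt p) (vec_of_pt q) * cross2 (vec_of_pt p) (vec_of_pt z) * cross2 (vec_of_pt z) (vec_of_pt q) \<le> 0"
proof (cases p)
  case None
  with assms obtain y where "q = Some y" by (cases q) auto
  with None show ?thesis by (cases z) (auto simp: ccw_interval_def)
next
  case (Some x)
  show ?thesis
  proof (cases q)
    case None
    with Some show ?thesis by (cases z) (auto simp: ccw_interval_def)
  next
    case (Some y)
    with \<open>p = Some x\<close> assms show ?thesis
      by (cases z) (auto simp: ccw_interval_def mult_le_0_iff zero_le_mult_iff)
  qed
qed

lemma mem_ccw_interval_pt_of_vec_iff:
  assumes uv: "cross2 u v \<noteq> 0"
  shows "z \<in> ccw_interval (pt_of_vec u) (pt_of_vec v) \<longleftrightarrow>
    cross2 u v * (cross2 u (vec_of_pt z) * cross2 (vec_of_pt z) v) \<le> 0"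
proof -
  have "u \<noteq> 0" "v \<noteq> 0" using uv by auto
  then have ne: "pt_of_vec u \<noteq> pt_of_vec v" using uv pt_of_vec_eq_iff by blast
  obtain s where s: "s \<noteq> 0" "vec_of_pt (pt_of_vec u) = s *\<^sub>R u"
    using \<open>u \<noteq> 0\<close> by (rule vec_of_pt_pt_of_vec)
  obtain r where r: "r \<noteq> 0" "vec_of_pt (pt_of_vec v) = r *\<^sub>R v"
    using \<open>v \<noteq> 0\<close> by (rule vec_of_pt_pt_of_vec)
  have pos: "(s * s) * (r * r) > 0" using s(1) r(1) by (metis mult_pos_pos not_real_square_gt_zero)
  have "z \<in> ccw_interval (pt_of_vec u) (pt_of_vec v) \<longleftrightarrow>
      ((s * s) * (r * r)) * (cross2 u v * (cross2 u (vec_of_pt z) * cross2 (vec_of_pt z) v)) \<le> 0"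
    unfolding mem_ccw_interval_iff[OF ne] s r by (simp add: algebra_simps)
  also have "\<dots> \<longleftrightarrow> cross2 u v * (cross2 u (vec_of_pt z) * cross2 (vec_of_pt z) v) \<le> 0"
    using mult_le_cancel_left_pos[OF pos, of _ 0] by simp
  finally show ?thesis .
qed

text \<open>For \<open>cross2 u v \<noteq> 0\<close>, the sign test in \<open>cone_arc u v\<close> selects, of the two arcs
  between \<open>pt_of_vec u\<close> and \<open>pt_of_vec v\<close>, the one containing \<open>pt_of_vec (u + v)\<close>.\<close>

definition cone_arc :: "real^2 \<Rightarrow> real^2 \<Rightarrow> bpt set" where
  "cone_arc u v = (if cross2 u v < 0 then ccw_interval (pt_of_vec u) (pt_of_vec v)
                   else ccw_interval (pt_of_vec v) (pt_of_vec u))"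

definition double_cone :: "real^2 \<Rightarrow> real^2 \<Rightarrow> (real^2) set" where
  "double_cone u v = {w. 0 \<le> cross2 u w * cross2 w v}"

definition cone2 :: "real^2 \<Rightarrow> real^2 \<Rightarrow> (real^2) set" where
  "cone2 u v = {a *\<^sub>R u + b *\<^sub>R v | a b. 0 \<le> a \<and> 0 \<le> b}"

lemma mem_cone_arc_iff:
  assumes "cross2 u v \<noteq> 0"
  shows "z \<in> cone_arc u v \<longleftrightarrow> vec_of_pt z \<in> double_cone u v"
proof (cases "cross2 u v < 0")
  case True
  then show ?thesis
    using mem_ccw_interval_pt_of_vec_iff[OF assms]
    by (simp add: cone_arc_def double_cone_def mult_le_0_iff zero_le_mult_iff)
next
  case False
  then have "cross2 v u < 0" "cross2 v u \<noteq> 0" using assms cross2_commute[of v u] by auto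
  then show ?thesis
    using False mem_ccw_interval_pt_of_vec_iff[of v u z]
    by (simp add: cone_arc_def double_cone_def mult_le_0_iff zero_le_mult_iff
        cross2_commute[of v] cross2_commute[of _ u]) blast
qed

lemma scaleR_mem_double_cone_iff:
  assumes "k \<noteq> 0"
  shows "k *\<^sub>R w \<in> double_cone u v \<longleftrightarrow> w \<in> double_cone u v"
proof -
  have kk: "0 < k * k" using assms by (metis not_real_square_gt_zero)
  have "cross2 u (k *\<^sub>R w) * cross2 (k *\<^sub>R w) v = (k * k) * (cross2 u w * cross2 w v)"
    by simp
  then show ?thesis
    unfolding double_cone_def mem_Collect_eq by (metis mult_le_cancel_left_pos[OF kk] mult_zero_right)
qed

lemma maps_into_cone_arc:
  assumes uv: "cross2 u v \<noteq> 0" and X: "det X \<noteq> 0"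
    and inv: "\<And>w. w \<in> double_cone u v \<Longrightarrow> X *v w \<in> double_cone u v"
  shows "maps_into X (cone_arc u v)"
  unfolding maps_into_def
proof clarify
  fix z assume "z \<in> cone_arc u v"
  then have Xz: "X *v vec_of_pt z \<in> double_cone u v"
    using inv mem_cone_arc_iff[OF uv] by blast
  have "X *v vec_of_pt z \<noteq> 0" using matrix_vector_mult_eq_0_iff[OF X] by simp
  then obtain k where "k \<noteq> 0" "vec_of_pt (pt_of_vec (X *v vec_of_pt z)) = k *\<^sub>R (X *v vec_of_pt z)"
    by (rule vec_of_pt_pt_of_vec)
  with Xz show "mob X z \<in> cone_arc u v"
    unfolding mob_def mem_cone_arc_iff[OF uv] by (simp add: scaleR_mem_double_cone_iff)
qed

lemma double_cone_invariant:
  assumes uv: "cross2 u v \<noteq> 0"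
    and Xu: "X *v u \<in> cone2 u v" and Xv: "X *v v \<in> cone2 u v"
    and w: "w \<in> double_cone u v"
  shows "X *v w \<in> double_cone u v"
proof -
  obtain p q where pq: "0 \<le> p" "0 \<le> q" "X *v u = p *\<^sub>R u + q *\<^sub>R v"
    using Xu unfolding cone2_def by blast
  obtain r s where rs: "0 \<le> r" "0 \<le> s" "X *v v = r *\<^sub>R u + s *\<^sub>R v"
    using Xv unfolding cone2_def by blast
  define \<alpha> where "\<alpha> = cross2 w v"
  define \<beta> where "\<beta> = cross2 u w"
  have "cross2 u v *\<^sub>R (X *v w) = X *v (\<alpha> *\<^sub>R u + \<beta> *\<^sub>R v)"
    by (simp add: \<alpha>_def \<beta>_def matrix_vector_mult_scaleR flip: cross2_scaleR_eq)
  also have "\<dots> = (\<alpha> * p + \<beta> * r) *\<^sub>R u + (\<alpha> * q + \<beta> * s) *\<^sub>R v"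
    by (simp add: pq rs matrix_vector_right_distrib matrix_vector_mult_scaleR algebra_simps)
  finally have Xw: "cross2 u v *\<^sub>R (X *v w) = (\<alpha> * p + \<beta> * r) *\<^sub>R u + (\<alpha> * q + \<beta> * s) *\<^sub>R v" .
  have "cross2 u (X *v w) = \<alpha> * q + \<beta> * s" "cross2 (X *v w) v = \<alpha> * p + \<beta> * r"
    using arg_cong[OF Xw, of "cross2 u"] arg_cong[OF Xw, of "\<lambda>z. cross2 z v"] uv by simp_all
  moreover have "(\<alpha> * q + \<beta> * s) * (\<alpha> * p + \<beta> * r) =
      (p * q) * (\<alpha> * \<alpha>) + (q * r + p * s) * (\<beta> * \<alpha>) + (r * s) * (\<beta> * \<beta>)"
    by (simp add: algebra_simps)
  moreover have "0 \<le> \<beta> * \<alpha>" using w by (simp add: double_cone_def \<alpha>_def \<beta>_def)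
  ultimately show ?thesis
    unfolding double_cone_def using pq rs by simp
qed

lemma mem_cone2I: "0 \<le> a \<Longrightarrow> 0 \<le> b \<Longrightarrow> a *\<^sub>R u + b *\<^sub>R v \<in> cone2 u v"
  unfolding cone2_def by blast

lemma scaleR_mem_cone2:
  assumes "0 \<le> m"
  shows "m *\<^sub>R u \<in> cone2 u v" "m *\<^sub>R v \<in> cone2 u v"
  using mem_cone2I[OF assms order_refl, of u v] mem_cone2I[OF order_refl assms, of u v] by simp_all

lemma interval_exists_if_cone_invariant:
  assumes uv: "cross2 u v \<noteq> 0" and "det X \<noteq> 0" "det Y \<noteq> 0"
    and "X *v u \<in> cone2 u v" "X *v v \<in> cone2 u v" "Y *v u \<in> cone2 u v" "Y *v v \<in> cone2 u v"
  shows "interval_exists X Y (pt_of_vec u) (pt_of_vec v)"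
proof -
  have "maps_into Z (cone_arc u v)" if "det Z \<noteq> 0" "Z *v u \<in> cone2 u v" "Z *v v \<in> cone2 u v" for Z
    by (rule maps_into_cone_arc[OF uv that(1) double_cone_invariant[OF uv that(2,3)]])
  then have "maps_into X (cone_arc u v)" "maps_into Y (cone_arc u v)"
    using assms by blast+
  then show ?thesis
    unfolding interval_exists_def cone_arc_def by (cases "cross2 u v < 0") simp_all
qed

lemma trace_mult_common_eigenvalue:
  fixes X Y :: mat2
  assumes "det X = 1" "det Y = 1" and uv: "cross2 u v \<noteq> 0"
    and Xu: "X *v u = m *\<^sub>R u" and Xv: "X *v v = d1 *\<^sub>R u + d2 *\<^sub>R v"
    and Yu: "Y *v u = c1 *\<^sub>R u + c2 *\<^sub>R v" and Yv: "Y *v v = m *\<^sub>R v"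
  shows "m * d2 = 1" and "m * c1 = 1" and "trace (X ** Y) = 2 + c2 * d1"
proof -
  have "(m * d2) * cross2 u v = cross2 u v" "(m * c1) * cross2 u v = cross2 u v"
    using cross2_matrix_vector_mult[of X u v] cross2_matrix_vector_mult[of Y u v] assms(1,2)
    by (simp_all add: Xu Xv Yu Yv algebra_simps)
  then show md2: "m * d2 = 1" and mc1: "m * c1 = 1" using uv by simp_all
  have "(X ** Y) *v u = (m * c1 + c2 * d1) *\<^sub>R u + (c2 * d2) *\<^sub>R v"
       "(X ** Y) *v v = (m * d1) *\<^sub>R u + (m * d2) *\<^sub>R v"
    by (simp_all add: Xu Xv Yu Yv matrix_vector_mult_scaleR matrix_vector_right_distrib algebra_simps
        flip: matrix_vector_mul_assoc)
  then have "trace (X ** Y) * cross2 u v = (m * c1 + c2 * d1 + m * d2) * cross2 u v"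
    unfolding trace_mult_cross2 by (simp add: algebra_simps cross2_commute[of v u])
  then show "trace (X ** Y) = 2 + c2 * d1" using uv md2 mc1 by simp
qed

lemma interval_exists_common_eigenvalue:
  fixes X Y :: mat2
  assumes dX: "det X = 1" and dY: "det Y = 1" and "u \<noteq> 0" "v \<noteq> 0"
    and Xu: "X *v u = m *\<^sub>R u" and Yv: "Y *v v = m *\<^sub>R v" and m: "m > 0"
    and tr: "trace (X ** Y) \<ge> 2"
  shows "interval_exists X Y (pt_of_vec u) (pt_of_vec v)"
proof (cases "cross2 u v = 0")
  case True
  then show ?thesis using pt_of_vec_eq_iff[OF \<open>u \<noteq> 0\<close> \<open>v \<noteq> 0\<close>] by (simp add: interval_exists_def)
next
  case uv: False
  obtain d1 d2 c1 c2 where Xv: "X *v v = d1 *\<^sub>R u + d2 *\<^sub>R v" and Yu: "Y *v u = c1 *\<^sub>R u + c2 *\<^sub>R v"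
    using cross2_coordinates[OF uv] by metis
  note coeffs = trace_mult_common_eigenvalue[OF dX dY uv Xu Xv Yu Yv]
  have "d2 \<ge> 0" "c1 \<ge> 0" using coeffs(1,2) m by (metis less_imp_le zero_less_mult_pos zero_less_one)+
  have eigen_cone: "X *v u \<in> cone2 u v" "Y *v v \<in> cone2 u v"
    "X *v (- u) \<in> cone2 (- u) v" "Y *v v \<in> cone2 (- u) v"
    using scaleR_mem_cone2[where u = u and v = v] scaleR_mem_cone2[where u = "- u" and v = v] m
    by (simp_all add: Xu Yv matrix_vector_mult_uminus)
  \<comment> \<open>As \<open>c2 * d1 \<ge> 0\<close>, both maps preserve the cone spanned by \<open>u\<close>, \<open>v\<close> or that spanned by \<open>-u\<close>, \<open>v\<close>.\<close>
  consider "d1 \<ge> 0" "c2 \<ge> 0" | "d1 \<le> 0" "c2 \<le> 0"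
    using coeffs(3) tr by (fastforce simp: zero_le_mult_iff)
  then show ?thesis
  proof cases
    case 1
    then have "X *v v \<in> cone2 u v" "Y *v u \<in> cone2 u v"
      unfolding Xv Yu using \<open>d2 \<ge> 0\<close> \<open>c1 \<ge> 0\<close> by (simp_all add: mem_cone2I)
    then show ?thesis using interval_exists_if_cone_invariant[OF uv] eigen_cone dX dY by simp
  next
    case 2
    have "X *v v = (- d1) *\<^sub>R (- u) + d2 *\<^sub>R v" "Y *v (- u) = c1 *\<^sub>R (- u) + (- c2) *\<^sub>R v"
      by (simp_all add: Xv Yu matrix_vector_mult_uminus)
    then have "X *v v \<in> cone2 (- u) v" "Y *v (- u) \<in> cone2 (- u) v"
      using 2 \<open>d2 \<ge> 0\<close> \<open>c1 \<ge> 0\<close> by (simp_all only: mem_cone2I neg_0_le_iff_le)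
    moreover have "cross2 (- u) v \<noteq> 0" using uv by simp
    ultimately have "interval_exists X Y (pt_of_vec (- u)) (pt_of_vec v)"
      using interval_exists_if_cone_invariant eigen_cone dX dY by simp
    moreover have "pt_of_vec (- u) = pt_of_vec u" using pt_of_vec_scaleR[of "-1" u] by simp
    ultimately show ?thesis by simp
  qed
qed

section \<open>Fixed points and coherent orientation\<close>

lemma four_le_square: "2 \<le> (T::real) \<Longrightarrow> 4 \<le> T\<^sup>2"
  using power_mono[of 2 T 2] by simp

definition larger_root :: "real \<Rightarrow> real" where
  "larger_root T = (T + sqrt (T\<^sup>2 - 4)) / 2"

lemma larger_root_ge_1:
  assumes "T \<ge> 2"
  shows "larger_root T \<ge> 1"
proof -
  have "0 \<le> sqrt (T\<^sup>2 - 4)" using four_le_square[OF assms] by simp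
  with assms have "2 \<le> T + sqrt (T\<^sup>2 - 4)" by linarith
  then show ?thesis unfolding larger_root_def by simp
qed

lemma larger_root_add_inverse:
  assumes "T \<ge> 2"
  shows "larger_root T + 1 / larger_root T = T"
proof -
  define r where "r = sqrt (T\<^sup>2 - 4)"
  have "T\<^sup>2 - 4 \<ge> 0" using four_le_square[OF assms] by simp
  then have r: "r\<^sup>2 = T\<^sup>2 - 4" "r \<ge> 0" unfolding r_def by simp_all
  have "(T + r) / 2 * ((T + r) / 2) + 1 = T * ((T + r) / 2)"
    using r(1) by (simp add: field_simps power2_eq_square)
  moreover have "larger_root T > 0" using larger_root_ge_1[OF assms] by simp
  ultimately show ?thesis unfolding larger_root_def r_def[symmetric] by (simp add: field_simps)
qed

lemma larger_root_of_add_inverse: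
  assumes "z \<ge> (1::real)"
  shows "larger_root (z + 1/z) = z"
proof -
  have "z > 0" using assms by simp
  then have "(z + 1/z)\<^sup>2 - 4 = (z - 1/z)\<^sup>2" by (simp add: field_simps power2_eq_square)
  moreover have "1/z \<le> 1" using assms by simp
  then have "z - 1/z \<ge> 0" using assms by linarith
  ultimately show ?thesis by (simp add: larger_root_def)
qed

lemma larger_root_strict_mono:
  assumes "2 \<le> T" "T < T'"
  shows "larger_root T < larger_root T'"
proof -
  have "T\<^sup>2 \<le> T'\<^sup>2" using assms by (intro power_mono) auto
  then have "sqrt (T\<^sup>2 - 4) \<le> sqrt (T'\<^sup>2 - 4)" by simp
  with assms(2) show ?thesis
    unfolding larger_root_def by (intro divide_strict_right_mono add_less_le_mono) simp_all
qed

lemma lam_plus_eq: "lam_plus X = larger_root (trace X)"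
  by (simp add: lam_plus_def larger_root_def)

lemma lam_minus_eq: "lam_minus X = trace X - lam_plus X"
  by (simp add: lam_plus_def lam_minus_def field_simps)

lemma lam_char_poly:
  assumes "trace X \<ge> 2"
  shows "(lam_plus X)\<^sup>2 - trace X * lam_plus X + 1 = 0"
    and "(lam_minus X)\<^sup>2 - trace X * lam_minus X + 1 = 0"
proof -
  let ?l = "lam_plus X"
  have "?l \<ge> 1" "?l + 1 / ?l = trace X"
    unfolding lam_plus_eq using assms by (simp_all add: larger_root_ge_1 larger_root_add_inverse)
  then have "trace X * ?l = ?l * ?l + 1" by (simp add: field_simps)
  then show "?l\<^sup>2 - trace X * ?l + 1 = 0"
    and "(lam_minus X)\<^sup>2 - trace X * lam_minus X + 1 = 0"
    unfolding lam_minus_eq by (simp_all add: power2_eq_square algebra_simps)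
qed

lemma eigenvector_exists:
  fixes X :: mat2
  assumes "l\<^sup>2 - trace X * l + det X = 0" and "\<forall>k. X \<noteq> mat k"
  obtains v where "v \<noteq> 0" "X *v v = l *\<^sub>R v"
proof -
  obtain a b c d where X: "X = mat2_of a b c d" by (rule mat2_cases)
  have char: "(a - l) * (d - l) = b * c" using assms(1) unfolding X by (simp add: power2_eq_square algebra_simps)
  show thesis
  proof (cases "a = l \<and> b = 0")
    case True
    then have "c \<noteq> 0 \<or> d \<noteq> l" using assms(2) unfolding X mat_eq_mat2_of by auto
    with True char show thesis
      by (intro that[of "vector [d - l, - c]"]) (auto simp: X algebra_simps)
  next
    case False
    with char show thesis
      by (intro that[of "vector [- b, a - l]"]) (auto simp: X algebra_simps)
  qed
qed

lemma eigenvectors_parallel: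
  fixes X :: mat2
  assumes "\<forall>k. X \<noteq> mat k" and v: "X *v v = l *\<^sub>R v" and w: "X *v w = l *\<^sub>R w"
  shows "cross2 v w = 0"
proof (rule ccontr)
  assume vw: "cross2 v w \<noteq> 0"
  have "X *v z = mat l *v z" for z
    by (subst (1 2) cross2_coordinates[OF vw, of z])
       (simp add: v w mat_matrix_vector_mult matrix_vector_right_distrib matrix_vector_mult_scaleR)
  then have "X = mat l" by (simp add: matrix_eq)
  with assms(1) show False by blast
qed

lemma eigenline_eq:
  fixes X :: mat2
  assumes "\<forall>k. X \<noteq> mat k" "v \<noteq> 0" "X *v v = l *\<^sub>R v"
  shows "(THE p. \<exists>v. v \<noteq> 0 \<and> X *v v = l *\<^sub>R v \<and> p = pt_of_vec v) = pt_of_vec v"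
proof (rule the_equality)
  fix p assume "\<exists>w. w \<noteq> 0 \<and> X *v w = l *\<^sub>R w \<and> p = pt_of_vec w"
  then obtain w where "w \<noteq> 0" "X *v w = l *\<^sub>R w" "p = pt_of_vec w" by blast
  with assms show "p = pt_of_vec v"
    using eigenvectors_parallel pt_of_vec_eq_iff by metis
qed (use assms in blast)

lemma fixed_point_eigenvectors:
  fixes X :: mat2
  assumes "det X = 1" "trace X \<ge> 2" "\<forall>k. X \<noteq> mat k"
  obtains u u' where "u \<noteq> 0" "X *v u = lam_plus X *\<^sub>R u" "fix_plus X = pt_of_vec u"
    and "u' \<noteq> 0" "X *v u' = lam_minus X *\<^sub>R u'" "fix_minus X = pt_of_vec u'"
proof -
  have "(lam_plus X)\<^sup>2 - trace X * lam_plus X + det X = 0"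
    and "(lam_minus X)\<^sup>2 - trace X * lam_minus X + det X = 0"
    using lam_char_poly[OF assms(2)] assms(1) by simp_all
  then obtain u u' where "u \<noteq> 0" "X *v u = lam_plus X *\<^sub>R u" "u' \<noteq> 0" "X *v u' = lam_minus X *\<^sub>R u'"
    using eigenvector_exists assms(3) by metis
  moreover from this have "fix_plus X = pt_of_vec u" "fix_minus X = pt_of_vec u'"
    unfolding fix_plus_def fix_minus_def using eigenline_eq assms(3) by simp_all
  ultimately show thesis using that by blast
qed

lemma coherently_oriented_if_trace_mult_ge_2:
  fixes A C :: mat2
  assumes dA: "det A = 1" and dC: "det C = 1" and tAC: "trace A = trace C" and t: "trace A \<ge> 2"
    and sA: "\<forall>k. A \<noteq> mat k" and sC: "\<forall>k. C \<noteq> mat k" and tr: "trace (A ** C) \<ge> 2"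
  shows "coherently_oriented A C"
proof -
  let ?l = "lam_plus A"
  have lC: "lam_plus C = ?l" "lam_minus C = lam_minus A"
    using tAC by (simp_all add: lam_plus_def lam_minus_def)
  obtain u u' where u: "u \<noteq> 0" "A *v u = ?l *\<^sub>R u" "fix_plus A = pt_of_vec u"
    and u': "u' \<noteq> 0" "A *v u' = lam_minus A *\<^sub>R u'" "fix_minus A = pt_of_vec u'"
    by (rule fixed_point_eigenvectors[OF dA t sA])
  obtain v v' where v: "v \<noteq> 0" "C *v v = ?l *\<^sub>R v" "fix_plus C = pt_of_vec v"
    and v': "v' \<noteq> 0" "C *v v' = lam_minus A *\<^sub>R v'" "fix_minus C = pt_of_vec v'"
    using fixed_point_eigenvectors[OF dC _ sC] t tAC unfolding lC by metis
  have l: "?l > 0" using larger_root_ge_1[OF t] by (simp add: lam_plus_eq)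
  have "interval_exists A C (fix_plus A) (fix_plus C)"
    unfolding u(3) v(3) using interval_exists_common_eigenvalue[OF dA dC u(1) v(1) u(2) v(2) l tr] .
  \<comment> \<open>The repelling fixed points are attracting for the inverses, with the same eigenvalue.\<close>
  moreover have "matrix_inv A *v u' = ?l *\<^sub>R u'" "matrix_inv C *v v' = ?l *\<^sub>R v'"
    using adjugate2_eigenvector[OF u'(2)] adjugate2_eigenvector[OF v'(2)] tAC
    by (simp_all add: matrix_inv_sl2 dA dC lam_minus_eq)
  then have "interval_exists (matrix_inv A) (matrix_inv C) (fix_minus A) (fix_minus C)"
    unfolding u'(3) v'(3) using interval_exists_common_eigenvalue[OF _ _ u'(1) v'(1) _ _ l] tr dA dC
    by (simp add: matrix_inv_sl2 det_adjugate2 trace_adjugate2_mult)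
  ultimately show ?thesis unfolding coherently_oriented_def by simp
qed

lemma trace_mult_gt_if_well_oriented:
  fixes A B :: mat2
  assumes dA: "det A = 1" and dB: "det B = 1" and nc: "A ** B \<noteq> B ** A"
    and tAB: "trace A = trace B" and t: "trace A \<ge> 2" and wo: "well_oriented A B"
  shows "trace (A ** B) > (trace A)\<^sup>2 - 2"
proof -
  have "\<forall>k. A \<noteq> mat k" "\<forall>k. adjugate2 B \<noteq> mat k"
    using nc mat_mult_commute adjugate2_mult_commute_iff by metis+
  moreover have "det (adjugate2 B) = 1" "trace A = trace (adjugate2 B)"
    using dB tAB by (simp_all add: det_adjugate2 trace_adjugate2)
  moreover have "\<not> coherently_oriented A (adjugate2 B)"
    using wo by (simp add: well_oriented_def matrix_inv_sl2[OF dB])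
  ultimately have "trace (A ** adjugate2 B) < 2"
    using coherently_oriented_if_trace_mult_ge_2[OF dA _ _ t] by fastforce
  then show ?thesis using tAB by (simp add: trace_mult_adjugate2 power2_eq_square)
qed

section \<open>Traces of words depend only on the traces of the generators\<close>

lemma phi_Nil [simp]: "phi A B [] = mat 1"
  by (simp add: phi_def)

lemma phi_Cons [simp]: "phi A B (l # w) = (case l of La \<Rightarrow> A | Lb \<Rightarrow> B) ** phi A B w"
  by (simp add: phi_def)

lemma phi_append: "phi A B (u @ w) = phi A B u ** phi A B w"
  by (induction u) (simp_all add: matrix_mul_assoc)

lemma det_phi:
  assumes "det A = 1" "det B = 1"
  shows "det (phi A B w) = 1"
  by (induction w) (use assms in \<open>simp_all add: det_mul split: letter.split\<close>)

definition lincomb4 :: "mat2 \<Rightarrow> mat2 \<Rightarrow> real \<times> real \<times> real \<times> real \<Rightarrow> mat2" where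
  "lincomb4 A B p = (case p of (p0, p1, p2, p3) \<Rightarrow>
     p0 *\<^sub>R mat 1 + p1 *\<^sub>R A + p2 *\<^sub>R B + p3 *\<^sub>R (A ** B))"

text \<open>With \<open>t = tr A = tr B\<close> and \<open>x = tr (A B)\<close>, left multiplication by \<open>A\<close> or \<open>B\<close> acts on
  the coefficients linearly, by Cayley-Hamilton \<open>A\<^sup>2 = t A - 1\<close>, \<open>B\<^sup>2 = t B - 1\<close> and the
  identity \<open>B A = t A + t B + (x - t\<^sup>2) - A B\<close>.\<close>

fun letter_step :: "real \<Rightarrow> real \<Rightarrow> letter \<Rightarrow> real \<times> real \<times> real \<times> real \<Rightarrow> real \<times> real \<times> real \<times> real"
  where
  "letter_step t x La (p0, p1, p2, p3) = (- p1, p0 + t * p1, - p3, p2 + t * p3)"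
| "letter_step t x Lb (p0, p1, p2, p3) =
     (p1 * (x - t * t) - p2 - t * p3, t * p1 + p3, p0 + t * p1 + t * p2 + x * p3, - p1)"

fun word_coeffs :: "real \<Rightarrow> real \<Rightarrow> letter list \<Rightarrow> real \<times> real \<times> real \<times> real" where
  "word_coeffs t x [] = (1, 0, 0, 0)"
| "word_coeffs t x (l # w) = letter_step t x l (word_coeffs t x w)"

lemma letter_mult_lincomb4:
  fixes A B :: mat2
  assumes "det A = 1" "det B = 1" "trace A = trace B"
  shows "(case l of La \<Rightarrow> A | Lb \<Rightarrow> B) ** lincomb4 A B p =
    lincomb4 A B (letter_step (trace A) (trace (A ** B)) l p)"
proof -
  obtain p0 p1 p2 p3 where p: "p = (p0, p1, p2, p3)" by (metis prod_cases4)
  obtain a1 a2 a3 a4 where A: "A = mat2_of a1 a2 a3 a4" by (rule mat2_cases)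
  obtain b1 b2 b3 b4 where B: "B = mat2_of b1 b2 b3 b4" by (rule mat2_cases)
  have "a1 * a4 - a2 * a3 = 1" "b1 * b4 - b2 * b3 = 1" "b1 + b4 = a1 + a4"
    using assms unfolding A B by simp_all
  then have "A ** lincomb4 A B p = lincomb4 A B (letter_step (trace A) (trace (A ** B)) La p)"
    and "B ** lincomb4 A B p = lincomb4 A B (letter_step (trace A) (trace (A ** B)) Lb p)"
    unfolding A B p by (simp_all add: lincomb4_def mat_eq_mat2_of) algebra+
  then show ?thesis by (cases l) simp_all
qed

lemma phi_eq_lincomb4:
  fixes A B :: mat2
  assumes "det A = 1" "det B = 1" "trace A = trace B"
  shows "phi A B w = lincomb4 A B (word_coeffs (trace A) (trace (A ** B)) w)"
proof (induction w)
  case Nil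
  then show ?case by (simp add: lincomb4_def)
next
  case (Cons l w)
  then show ?case
    using letter_mult_lincomb4[OF assms] by simp
qed

definition word_trace :: "real \<Rightarrow> real \<Rightarrow> letter list \<Rightarrow> real" where
  "word_trace t x w = (case word_coeffs t x w of (p0, p1, p2, p3) \<Rightarrow> 2 * p0 + t * p1 + t * p2 + x * p3)"

lemma wtr_eq_word_trace:
  fixes A B :: mat2
  assumes "det A = 1" "det B = 1" "trace A = trace B"
  shows "wtr A B w = word_trace (trace A) (trace (A ** B)) w"
proof -
  obtain p0 p1 p2 p3 where p: "word_coeffs (trace A) (trace (A ** B)) w = (p0, p1, p2, p3)"
    by (metis prod_cases4)
  show ?thesis
    unfolding wtr_def word_trace_def phi_eq_lincomb4[OF assms] p lincomb4_def using assms(3)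
    by (simp add: trace_add trace_scaleR trace_I)
qed

lemma wtr_eq_if_traces_eq:
  fixes A B M N :: mat2
  assumes "det A = 1" "det B = 1" "det M = 1" "det N = 1"
    and "trace A = trace B" "trace M = trace N" "trace M = trace A"
    and "trace (M ** N) = trace (A ** B)"
  shows "wtr A B = wtr M N"
  using assms by (simp add: fun_eq_iff wtr_eq_word_trace)

lemma complete_optimal_set_cong:
  "wtr A B = wtr M N \<Longrightarrow> complete_optimal_set A B S = complete_optimal_set M N S"
  by (simp add: complete_optimal_set_def maximal_word_def wle_def)

section \<open>Operator norm bounds in SL(2)\<close>

lemma quadratic_form_nonneg_iff:
  fixes \<alpha> \<gamma> q :: real
  shows "(\<forall>v1 v2. 0 \<le> \<alpha> * v1\<^sup>2 - 2 * q * v1 * v2 + \<gamma> * v2\<^sup>2) \<longleftrightarrow> 0 \<le> \<alpha> \<and> 0 \<le> \<gamma> \<and> q\<^sup>2 \<le> \<alpha> * \<gamma>"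
proof
  assume psd: "\<forall>v1 v2. 0 \<le> \<alpha> * v1\<^sup>2 - 2 * q * v1 * v2 + \<gamma> * v2\<^sup>2"
  have \<alpha>: "0 \<le> \<alpha>" and \<gamma>: "0 \<le> \<gamma>" using psd[rule_format, of 1 0] psd[rule_format, of 0 1] by simp_all
  have "0 \<le> \<alpha> * (\<alpha> * \<gamma> - q\<^sup>2)"
    using psd[rule_format, of q \<alpha>] by (simp add: power2_eq_square algebra_simps)
  moreover have "0 \<le> - (q\<^sup>2 * (\<gamma> + 2))" if "\<alpha> = 0"
    using psd[rule_format, of "\<gamma> + 1" q] that by (simp add: power2_eq_square algebra_simps)
  ultimately have "q\<^sup>2 \<le> \<alpha> * \<gamma>"
    using \<alpha> \<gamma> by (cases "\<alpha> = 0") (auto simp: zero_le_mult_iff mult_le_0_iff)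
  with \<alpha> \<gamma> show "0 \<le> \<alpha> \<and> 0 \<le> \<gamma> \<and> q\<^sup>2 \<le> \<alpha> * \<gamma>" by simp
next
  assume coeffs: "0 \<le> \<alpha> \<and> 0 \<le> \<gamma> \<and> q\<^sup>2 \<le> \<alpha> * \<gamma>"
  show "\<forall>v1 v2. 0 \<le> \<alpha> * v1\<^sup>2 - 2 * q * v1 * v2 + \<gamma> * v2\<^sup>2"
  proof (intro allI)
    fix v1 v2 :: real
    have "\<alpha> * (\<alpha> * v1\<^sup>2 - 2 * q * v1 * v2 + \<gamma> * v2\<^sup>2) = (\<alpha> * v1 - q * v2)\<^sup>2 + (\<alpha> * \<gamma> - q\<^sup>2) * v2\<^sup>2"
      by (simp add: power2_eq_square algebra_simps)
    also have "\<dots> \<ge> 0" using coeffs by simp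
    finally have "0 \<le> \<alpha> * (\<alpha> * v1\<^sup>2 - 2 * q * v1 * v2 + \<gamma> * v2\<^sup>2)" .
    moreover have "q = 0" if "\<alpha> = 0" using coeffs that by simp
    ultimately show "0 \<le> \<alpha> * v1\<^sup>2 - 2 * q * v1 * v2 + \<gamma> * v2\<^sup>2"
      using coeffs by (cases "\<alpha> = 0") (auto simp: zero_le_mult_iff)
  qed
qed

definition norm_sq_bound :: "mat2 \<Rightarrow> real \<Rightarrow> bool" where
  "norm_sq_bound X c \<longleftrightarrow> (\<forall>v. (norm (X *v v))\<^sup>2 \<le> c * (norm v)\<^sup>2)"

definition frob_sq :: "mat2 \<Rightarrow> real" where
  "frob_sq X = (X$1$1)\<^sup>2 + (X$1$2)\<^sup>2 + (X$2$1)\<^sup>2 + (X$2$2)\<^sup>2"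

lemma norm_vector2_sq [simp]: "(norm (vector [p, q] :: real^2))\<^sup>2 = p\<^sup>2 + q\<^sup>2"
  unfolding power2_norm_eq_inner by (simp add: inner_vec_def sum_2 power2_eq_square)

lemma frob_sq_mat2_of [simp]: "frob_sq (mat2_of a b c d) = a\<^sup>2 + b\<^sup>2 + c\<^sup>2 + d\<^sup>2"
  by (simp add: frob_sq_def)

lemma frob_sq_ge_2:
  assumes "det X = 1"
  shows "frob_sq X \<ge> 2"
proof -
  obtain a b c d where X: "X = mat2_of a b c d" by (rule mat2_cases)
  have "frob_sq X - 2 * det X = (a - d)\<^sup>2 + (b + c)\<^sup>2"
    by (simp add: X power2_eq_square algebra_simps)
  with assms show ?thesis using zero_le_power2[of "a - d"] zero_le_power2[of "b + c"] by linarith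
qed

lemma trace_sq_le_frob_sq:
  assumes "det X = 1"
  shows "(trace X)\<^sup>2 \<le> frob_sq X + 2"
proof -
  obtain a b c d where X: "X = mat2_of a b c d" by (rule mat2_cases)
  have "frob_sq X + 2 * det X - (trace X)\<^sup>2 = (b - c)\<^sup>2"
    by (simp add: X power2_eq_square algebra_simps)
  with assms show ?thesis using zero_le_power2[of "b - c"] by linarith
qed

text \<open>\<open>p\<close>, \<open>q\<close>, \<open>r\<close> are the entries of the Gram matrix \<open>X\<^sup>T X\<close>, of determinant \<open>1\<close> and
  trace \<open>frob_sq X\<close>.\<close>

lemma sl2_gram_cases:
  assumes "det X = 1"
  obtains p q r where "p * r - q\<^sup>2 = 1" "frob_sq X = p + r"
    and "\<And>k. norm_sq_bound X k \<longleftrightarrow> 0 \<le> k - p \<and> 0 \<le> k - r \<and> q\<^sup>2 \<le> (k - p) * (k - r)"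
proof -
  obtain a b c d where X: "X = mat2_of a b c d" by (rule mat2_cases)
  define p q r where "p = a\<^sup>2 + c\<^sup>2" and "q = a * b + c * d" and "r = b\<^sup>2 + d\<^sup>2"
  have "k * (norm (vector [v1, v2] :: real^2))\<^sup>2 - (norm (X *v vector [v1, v2]))\<^sup>2 =
      (k - p) * v1\<^sup>2 - 2 * q * v1 * v2 + (k - r) * v2\<^sup>2" for k v1 v2
    by (simp add: X p_def q_def r_def) (simp add: power2_eq_square algebra_simps)
  then have pointwise: "(norm (X *v vector [v1, v2]))\<^sup>2 \<le> k * (norm (vector [v1, v2] :: real^2))\<^sup>2 \<longleftrightarrow>
      0 \<le> (k - p) * v1\<^sup>2 - 2 * q * v1 * v2 + (k - r) * v2\<^sup>2" for k v1 v2
    by (metis diff_ge_0_iff_ge)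
  have "norm_sq_bound X k \<longleftrightarrow> (\<forall>v1 v2. 0 \<le> (k - p) * v1\<^sup>2 - 2 * q * v1 * v2 + (k - r) * v2\<^sup>2)"
    for k
    unfolding norm_sq_bound_def pointwise[symmetric] by (metis vector2_cases)
  moreover have "p * r - q\<^sup>2 = (det X)\<^sup>2"
    by (simp add: X p_def q_def r_def power2_eq_square algebra_simps)
  moreover have "frob_sq X = p + r" by (simp add: X p_def r_def)
  ultimately show thesis using that assms by (simp add: quadratic_form_nonneg_iff)
qed

text \<open>\<open>larger_root (frob_sq X)\<close> is the larger eigenvalue of \<open>X\<^sup>T X\<close>, i.e. the squared
  operator norm of \<open>X\<close>.\<close>

lemma norm_sq_bound_larger_root_frob_sq:
  assumes "det X = 1"
  shows "norm_sq_bound X (larger_root (frob_sq X))"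
proof -
  obtain p q r where pqr: "p * r - q\<^sup>2 = 1" and F: "frob_sq X = p + r"
    and bound: "\<And>k. norm_sq_bound X k \<longleftrightarrow> 0 \<le> k - p \<and> 0 \<le> k - r \<and> q\<^sup>2 \<le> (k - p) * (k - r)"
    using sl2_gram_cases[OF assms] by metis
  define S where "S = sqrt ((p + r)\<^sup>2 - 4)"
  have "(p + r)\<^sup>2 - 4 = (p - r)\<^sup>2 + 4 * q\<^sup>2" using pqr by (simp add: power2_eq_square algebra_simps)
  then have S2: "S\<^sup>2 = (p - r)\<^sup>2 + 4 * q\<^sup>2" and "S \<ge> 0" unfolding S_def by simp_all
  then have "(p - r)\<^sup>2 \<le> S\<^sup>2" by simp
  then have "\<bar>p - r\<bar> \<le> S" using \<open>S \<ge> 0\<close> by (metis abs_le_square_iff abs_of_nonneg)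
  then have "0 \<le> (p + r + S) / 2 - p" "0 \<le> (p + r + S) / 2 - r" by (simp_all add: abs_le_iff)
  moreover have "q\<^sup>2 = ((p + r + S) / 2 - p) * ((p + r + S) / 2 - r)"
    using S2 by (simp add: field_simps power2_eq_square)
  moreover have "larger_root (frob_sq X) = (p + r + S) / 2" by (simp add: F S_def larger_root_def)
  ultimately show ?thesis unfolding bound by (simp only: order_refl simp_thms)
qed

lemma norm_sq_bound_frob_sq:
  assumes "det X = 1" and "norm_sq_bound X k"
  shows "1 \<le> k" and "frob_sq X \<le> k + 1 / k"
proof -
  obtain p q r where pqr: "p * r - q\<^sup>2 = 1" and F: "frob_sq X = p + r"
    and bound: "\<And>k. norm_sq_bound X k \<longleftrightarrow> 0 \<le> k - p \<and> 0 \<le> k - r \<and> q\<^sup>2 \<le> (k - p) * (k - r)"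
    using sl2_gram_cases[OF assms(1)] by metis
  have psd: "0 \<le> k - p" "0 \<le> k - r" "q\<^sup>2 \<le> (k - p) * (k - r)" using assms(2) bound by simp_all
  then show "1 \<le> k" using frob_sq_ge_2[OF assms(1)] F by linarith
  then have "k * (k + 1 / k - frob_sq X) = (k - p) * (k - r) - q\<^sup>2"
    using pqr by (simp add: F field_simps)
  also have "\<dots> \<ge> 0" using psd(3) by simp
  finally show "frob_sq X \<le> k + 1 / k" using \<open>1 \<le> k\<close> by (simp add: zero_le_mult_iff)
qed

lemma trace_sq_le_of_norm_sq_bound:
  assumes "det X = 1" and "norm_sq_bound X k"
  shows "(trace X)\<^sup>2 \<le> k + 1 / k + 2"
  using trace_sq_le_frob_sq[OF assms(1)] norm_sq_bound_frob_sq(2)[OF assms] by linarith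

lemma norm_sq_bound_mult:
  assumes "norm_sq_bound X c" "norm_sq_bound Y d" "0 \<le> c"
  shows "norm_sq_bound (X ** Y) (c * d)"
  unfolding norm_sq_bound_def
proof
  fix v :: "real^2"
  have "(norm ((X ** Y) *v v))\<^sup>2 = (norm (X *v (Y *v v)))\<^sup>2" by (simp add: matrix_vector_mul_assoc)
  also have "\<dots> \<le> c * (norm (Y *v v))\<^sup>2" using assms(1) by (simp add: norm_sq_bound_def)
  also have "\<dots> \<le> c * (d * (norm v)\<^sup>2)"
    using assms(2,3) by (intro mult_left_mono) (simp_all add: norm_sq_bound_def)
  finally show "(norm ((X ** Y) *v v))\<^sup>2 \<le> c * d * (norm v)\<^sup>2" by simp
qed

lemma norm_sq_bound_one: "norm_sq_bound (mat 1) 1"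
  by (simp add: norm_sq_bound_def)

lemma add_inverse_strict_mono:
  fixes c D :: real
  assumes "1 \<le> c" "c < D"
  shows "c + 1 / c < D + 1 / D"
proof -
  have "1 * D \<le> c * D" using assms by (intro mult_right_mono) simp_all
  then have "1 < c * D" using assms by linarith
  then have "1 / (c * D) < 1" by simp
  moreover have "D + 1 / D - (c + 1 / c) = (D - c) * (1 - 1 / (c * D))"
    using assms by (simp add: field_simps)
  ultimately have "0 < D + 1 / D - (c + 1 / c)" using assms(2) by (simp add: mult_pos_pos)
  then show ?thesis by simp
qed

section \<open>Words whose square has no two equal adjacent letters\<close>

lemma wpow_0 [simp]: "wpow w 0 = []"
  by (simp add: wpow_def)

lemma wpow_Suc: "wpow w (Suc n) = w @ wpow w n"
  by (simp add: wpow_def)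

fun other :: "letter \<Rightarrow> letter" where
  "other La = Lb"
| "other Lb = La"

lemma other_other [simp]: "other (other l) = l"
  by (cases l) simp_all

lemma other_neq [simp]: "other l \<noteq> l"
  by (cases l) simp_all

lemma eq_other_if_neq: "l' \<noteq> l \<Longrightarrow> l' = other l"
  by (cases l; cases l') simp_all

fun alternating :: "letter \<Rightarrow> nat \<Rightarrow> letter list" where
  "alternating l 0 = []"
| "alternating l (Suc n) = l # alternating (other l) n"

lemma alternating_add:
  "alternating l (m + n) = alternating l m @ alternating (if even m then l else other l) n"
  by (induction m arbitrary: l) simp_all

lemma alternating_double: "alternating l (2 * k) = wpow [l, other l] k"
  by (induction k) (simp_all add: wpow_Suc)

lemma length_alternating [simp]: "length (alternating l n) = n"
  by (induction n arbitrary: l) simp_all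

lemma hd_alternating: "0 < n \<Longrightarrow> hd (alternating l n) = l"
  by (cases n) simp_all

lemma distinct_adj_eq_alternating:
  "distinct_adj (l # w) \<Longrightarrow> l # w = alternating l (Suc (length w))"
proof (induction w arbitrary: l)
  case (Cons l' w)
  then have "l \<noteq> l'" "distinct_adj (l' # w)" by simp_all
  then have "l' = other l" by (metis eq_other_if_neq)
  moreover have "l' # w = alternating l' (Suc (length w))" using Cons.IH \<open>distinct_adj (l' # w)\<close> .
  ultimately show ?case by simp
qed simp

lemma distinct_adj_square:
  assumes "w \<noteq> []" and "distinct_adj (w @ w)"
  obtains k where "k \<ge> 1" "w = wpow [La, Lb] k \<or> w = wpow [Lb, La] k"
proof -
  define l n where "l = hd w" and "n = length w"
  define l' where "l' = (if even n then l else other l)"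
  have "0 < n" using assms(1) by (simp add: n_def)
  have ww: "w @ w = l # (tl w @ w)" using assms(1) by (simp add: l_def)
  have "w @ w = alternating l (Suc (length (tl w @ w)))"
    using assms(2) unfolding ww by (rule distinct_adj_eq_alternating)
  moreover have "Suc (length (tl w @ w)) = n + n" using \<open>0 < n\<close> by (simp add: n_def)
  ultimately have "w @ w = alternating l (n + n)" by metis
  also have "\<dots> = alternating l n @ alternating l' n" by (simp add: alternating_add l'_def)
  finally have wl: "w = alternating l n" and "w = alternating l' n"
    by (simp_all add: append_eq_append_conv n_def)
  then have "l' = l" using hd_alternating[OF \<open>0 < n\<close>] by metis
  then have "even n" by (auto simp: l'_def split: if_splits)
  then obtain k where "n = 2 * k" by blast
  then have "w = wpow [l, other l] k" "k \<ge> 1"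
    using wl \<open>0 < n\<close> by (simp_all add: alternating_double)
  then show thesis by (cases l) (auto intro: that)
qed

lemma not_distinct_adj_split:
  assumes "\<not> distinct_adj u"
  shows "\<exists>p l s. u = p @ [l, l] @ s"
  using assms
proof (induction u rule: induct_list012)
  case (3 x y zs)
  show ?case
  proof (cases "x = y")
    case True
    then have "x # y # zs = [] @ [x, x] @ zs" by simp
    then show ?thesis by blast
  next
    case False
    with "3.prems" obtain p l s where "y # zs = p @ [l, l] @ s" using "3.IH"(2) by auto
    then have "x # y # zs = (x # p) @ [l, l] @ s" by simp
    then show ?thesis by blast
  qed
qed simp_all

lemma lyndon_ab: "lyndon [La, Lb]"
  by (auto simp: lyndon_def letter_less_def less_Suc_eq)

section \<open>A triangular model pair\<close>

locale triangular_pair =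
  fixes a b :: real
  assumes a_pos: "a > 0" and b_nonzero: "b \<noteq> 0"
begin

abbreviation M :: mat2 where "M \<equiv> mat2_of a b 0 (1 / a)"

abbreviation N :: mat2 where "N \<equiv> mat2_of a 0 b (1 / a)"

definition L :: real where "L = larger_root (frob_sq M)"

lemma det_M: "det M = 1" and det_N: "det N = 1"
  using a_pos by simp_all

lemma frob_sq_N: "frob_sq N = frob_sq M"
  by simp

lemma trace_MN: "trace (M ** N) = frob_sq M"
  by (simp add: power2_eq_square)

lemma L_ge_1: "L \<ge> 1" and L_add_inverse: "L + 1 / L = frob_sq M"
  unfolding L_def using frob_sq_ge_2[OF det_M] by (simp_all add: larger_root_ge_1 larger_root_add_inverse)

lemma letter_norm_sq_bound: "norm_sq_bound (case l of La \<Rightarrow> M | Lb \<Rightarrow> N) L"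
  using norm_sq_bound_larger_root_frob_sq[OF det_M] norm_sq_bound_larger_root_frob_sq[OF det_N]
  unfolding L_def frob_sq_N by (simp split: letter.split)

lemma word_norm_sq_bound: "norm_sq_bound (phi M N u) (L ^ length u)"
proof (induction u)
  case Nil
  then show ?case by (simp add: norm_sq_bound_one)
next
  case (Cons l u)
  then show ?case using norm_sq_bound_mult[OF letter_norm_sq_bound] L_ge_1 by simp
qed

lemma frob_sq_square_N: "frob_sq (N ** N) = frob_sq (M ** M)"
  by (simp add: mult.commute)

lemma frob_sq_square_M_lt: "frob_sq (M ** M) < (frob_sq M)\<^sup>2 - 2"
proof -
  define ia where "ia = 1 / a"
  have "a * ia = 1" using a_pos by (simp add: ia_def)
  then have "(frob_sq M)\<^sup>2 - 2 - frob_sq (M ** M) = b\<^sup>2 * (a - ia)\<^sup>2 + (b\<^sup>2)\<^sup>2"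
    unfolding ia_def[symmetric] by (simp add: power2_eq_square algebra_simps)
  moreover have "(b\<^sup>2)\<^sup>2 > 0" "b\<^sup>2 * (a - ia)\<^sup>2 \<ge> 0" using b_nonzero by simp_all
  ultimately show ?thesis by linarith
qed

lemma square_letter_norm_sq_bound:
  obtains c where "norm_sq_bound (phi M N [l, l]) c" "0 \<le> c" "c < L\<^sup>2"
proof -
  let ?c = "larger_root (frob_sq (M ** M))"
  have dMM: "det (M ** M) = 1" and dNN: "det (N ** N) = 1"
    using det_M det_N by (simp_all only: det_mul)
  have "(frob_sq M)\<^sup>2 - 2 = L\<^sup>2 + 1 / L\<^sup>2"
    using L_ge_1 unfolding L_add_inverse[symmetric] by (simp add: field_simps power2_eq_square)
  then have "?c < larger_root (L\<^sup>2 + 1 / L\<^sup>2)"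
    using frob_sq_ge_2[OF dMM] frob_sq_square_M_lt by (intro larger_root_strict_mono) simp_all
  also have "\<dots> = L\<^sup>2" using L_ge_1 by (intro larger_root_of_add_inverse) simp
  finally have "?c < L\<^sup>2" .
  moreover have "norm_sq_bound (phi M N [l, l]) ?c"
    using norm_sq_bound_larger_root_frob_sq[OF dMM] norm_sq_bound_larger_root_frob_sq[OF dNN]
    unfolding frob_sq_square_N by (cases l) simp_all
  moreover have "0 \<le> ?c" using larger_root_ge_1[OF frob_sq_ge_2[OF dMM]] by simp
  ultimately show thesis using that by blast
qed

lemma square_letter_strict_norm_sq_bound:
  assumes "u = p @ [l, l] @ s"
  obtains c where "norm_sq_bound (phi M N u) c" "c < L ^ length u"
proof -
  obtain c where c: "norm_sq_bound (phi M N [l, l]) c" "0 \<le> c" "c < L\<^sup>2"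
    by (rule square_letter_norm_sq_bound)
  have "norm_sq_bound (phi M N u) (L ^ length p * (c * L ^ length s))"
    unfolding assms phi_append using L_ge_1 c(1,2)
    by (intro norm_sq_bound_mult word_norm_sq_bound) simp_all
  moreover have "L ^ length p * (c * L ^ length s) < L ^ length u"
    using c(3) L_ge_1 by (simp add: assms power_add power2_eq_square)
  ultimately show thesis by (rule that)
qed

lemma trace_alternating: "wtr M N (wpow [La, Lb] n) = L ^ n + (1 / L) ^ n"
proof -
  define Q where "Q = M ** N"
  have phi_Suc: "phi M N (wpow [La, Lb] (Suc n)) = Q ** phi M N (wpow [La, Lb] n)" for n
    by (simp add: wpow_Suc phi_append Q_def matrix_mul_assoc del: mat2_of_mult)
  have trQ: "trace Q = L + 1 / L" unfolding Q_def trace_MN L_add_inverse ..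
  have dQ: "det Q = 1" unfolding Q_def det_mul det_M det_N by simp
  have "wtr M N (wpow [La, Lb] (Suc (Suc n))) =
      (L + 1 / L) * wtr M N (wpow [La, Lb] (Suc n)) - wtr M N (wpow [La, Lb] n)" for n
    by (simp add: wtr_def phi_Suc cayley_hamilton2_mult[OF dQ] trQ trace_sub trace_scaleR)
  then show ?thesis
  proof (induction n rule: induct_nat_012)
    case 0
    then show ?case by (simp add: wtr_def mat_eq_mat2_of)
  next
    case 1
    then show ?case using trQ by (simp add: wtr_def phi_Suc)
  next
    case (ge2 n)
    have "L \<noteq> 0" using L_ge_1 by simp
    then have "(L + 1 / L) * (L * L ^ n + 1 / (L * L ^ n)) - (L ^ n + 1 / L ^ n) =
        L * (L * L ^ n) + 1 / (L * (L * L ^ n))"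
      by (simp add: field_simps)
    with ge2 show ?case by (simp add: power_one_over)
  qed
qed

lemma trace_square_le:
  assumes "w \<noteq> []"
  shows "wtr M N (w @ w) \<le> wtr M N (wpow [La, Lb] (length w))"
    and "\<not> distinct_adj (w @ w) \<Longrightarrow> wtr M N (w @ w) < wtr M N (wpow [La, Lb] (length w))"
proof -
  define n where "n = length w"
  define W where "W = phi M N (w @ w)"
  define G where "G = L ^ n + (1 / L) ^ n"
  have dW: "det W = 1" unfolding W_def using det_phi[OF det_M det_N] .
  have G: "wtr M N (wpow [La, Lb] (length w)) = G" by (simp add: G_def n_def trace_alternating)
  have G_sq: "G\<^sup>2 = L ^ (2 * n) + 1 / L ^ (2 * n) + 2"
    using L_ge_1 by (simp add: G_def power2_eq_square field_simps power_mult_distrib flip: power_add mult_2)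
  have "G \<ge> 0" using L_ge_1 by (simp add: G_def)
  have "norm_sq_bound W (L ^ (2 * n))" using word_norm_sq_bound[of "w @ w"] by (simp add: W_def n_def mult_2)
  then have "(trace W)\<^sup>2 \<le> G\<^sup>2" using trace_sq_le_of_norm_sq_bound[OF dW] G_sq by simp
  then have "trace W \<le> G" using \<open>G \<ge> 0\<close> by (rule power2_le_imp_le)
  then show "wtr M N (w @ w) \<le> wtr M N (wpow [La, Lb] (length w))" unfolding G by (simp add: W_def wtr_def)
  assume "\<not> distinct_adj (w @ w)"
  then obtain p l s where "w @ w = p @ [l, l] @ s" using not_distinct_adj_split by blast
  then obtain c where c: "norm_sq_bound W c" "c < L ^ (2 * n)"
    using square_letter_strict_norm_sq_bound unfolding W_def n_def by (metis length_append mult_2)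
  have "c + 1 / c < L ^ (2 * n) + 1 / L ^ (2 * n)"
    using add_inverse_strict_mono[OF norm_sq_bound_frob_sq(1)[OF dW c(1)] c(2)] .
  then have "(trace W)\<^sup>2 < G\<^sup>2" using trace_sq_le_of_norm_sq_bound[OF dW c(1)] G_sq by simp
  then have "trace W < G" using \<open>G \<ge> 0\<close> by (rule power2_less_imp_less)
  then show "wtr M N (w @ w) < wtr M N (wpow [La, Lb] (length w))" unfolding G by (simp add: W_def wtr_def)
qed

lemma complete_optimal_set_ab: "complete_optimal_set M N {[La, Lb]}"
  unfolding complete_optimal_set_def
proof (rule conjI; intro ballI allI impI)
  fix s assume "s \<in> {[La, Lb]}"
  moreover have "maximal_word M N [La, Lb]"
    using trace_square_le(1) by (simp add: maximal_word_def wle_def wpow_Suc)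
  ultimately show "maximal_word M N s \<and> lyndon s" using lyndon_ab by simp
next
  fix w assume "maximal_word M N w"
  then have "w \<noteq> []" and "wle M N [La, Lb] w" by (simp_all add: maximal_word_def)
  then have "wtr M N (wpow [La, Lb] (length w)) \<le> wtr M N (w @ w)" by (simp add: wle_def wpow_Suc)
  have "distinct_adj (w @ w)"
  proof (rule ccontr)
    assume "\<not> distinct_adj (w @ w)"
    with \<open>w \<noteq> []\<close> have "wtr M N (w @ w) < wtr M N (wpow [La, Lb] (length w))"
      by (rule trace_square_le(2))
    with \<open>wtr M N (wpow [La, Lb] (length w)) \<le> wtr M N (w @ w)\<close> show False by simp
  qed
  then obtain k where "k \<ge> 1" "w = wpow [La, Lb] k \<or> w = wpow [Lb, La] k"
    using distinct_adj_square \<open>w \<noteq> []\<close> by blast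
  then consider "w = wpow (rotate 0 [La, Lb]) k" | "w = wpow (rotate 1 [La, Lb]) k" by auto
  then show "\<exists>s\<in>{[La, Lb]}. \<exists>k n. n \<ge> 1 \<and> w = wpow (rotate k s) n"
    using \<open>k \<ge> 1\<close> by cases blast+
qed

end

lemma triangular_pair_exists:
  fixes t x :: real
  assumes "t \<ge> 2" and "x > t\<^sup>2 - 2"
  obtains a b where "triangular_pair a b"
    and "trace (mat2_of a b 0 (1 / a)) = t" "trace (mat2_of a 0 b (1 / a)) = t"
    and "trace (mat2_of a b 0 (1 / a) ** mat2_of a 0 b (1 / a)) = x"
proof -
  define a b where "a = larger_root t" and "b = sqrt (x - t\<^sup>2 + 2)"
  have "a \<ge> 1" and a: "a + 1 / a = t"
    using assms(1) by (simp_all add: a_def larger_root_ge_1 larger_root_add_inverse)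
  have b: "b\<^sup>2 = x - t\<^sup>2 + 2" "b \<noteq> 0" using assms(2) by (simp_all add: b_def)
  have "triangular_pair a b" using \<open>a \<ge> 1\<close> b(2) by unfold_locales simp_all
  moreover have "trace (mat2_of a b 0 (1 / a)) = t" "trace (mat2_of a 0 b (1 / a)) = t"
    using a by simp_all
  moreover have "t\<^sup>2 = a * a + 1 / (a * a) + 2"
    using \<open>a \<ge> 1\<close> unfolding a[symmetric] by (simp add: field_simps power2_eq_square)
  then have "trace (mat2_of a b 0 (1 / a) ** mat2_of a 0 b (1 / a)) = x"
    using b(1) by (simp add: power2_eq_square)
  ultimately show thesis by (rule that)
qed

theorem theorem3p6:
  fixes A B :: "real^2^2"
  assumes "det A = 1" and "det B = 1"
    and "A ** B \<noteq> B ** A"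
    and "trace A = trace B" and "trace A \<ge> 2"
    and "well_oriented A B"
  shows "complete_optimal_set A B {[La, Lb]}"
proof -
  have "trace (A ** B) > (trace A)\<^sup>2 - 2"
    using trace_mult_gt_if_well_oriented[OF assms] .
  then obtain a b where ab: "triangular_pair a b"
    and tr: "trace (mat2_of a b 0 (1 / a)) = trace A" "trace (mat2_of a 0 b (1 / a)) = trace A"
      "trace (mat2_of a b 0 (1 / a) ** mat2_of a 0 b (1 / a)) = trace (A ** B)"
    by (rule triangular_pair_exists[OF assms(5)])
  have "wtr A B = wtr (mat2_of a b 0 (1 / a)) (mat2_of a 0 b (1 / a))"
    using tr by (intro wtr_eq_if_traces_eq assms(1,2,4) triangular_pair.det_M[OF ab]
        triangular_pair.det_N[OF ab]) simp_all
  then show ?thesis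
    using complete_optimal_set_cong triangular_pair.complete_optimal_set_ab[OF ab] by blast
qed

end
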